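(* Let $n\geq 1$ and $R>0$, and set $$C_1(R,n)=\frac{\omega_n}{4e^{2nR}}\left(\frac{e^{2R}-1}{e^{2(R+1)}-1}\right)^n,\qquad C_2(R,n)=\left(\frac{e^{4R}-1}{2}\right)^n\omega_n .$$ If $\mathcal{C}\subset\mathbb{R}^n$ is a bounded open convex set with its Hilbert distance $d_{\mathcal{C}}$ and Hilbert measure $\mu_{\mathcal{C}}$, then for every ball $B_R$ of radius $R$ in $(\mathcal{C},d_{\mathcal{C}})$, $$C_1(R,n)\leq\mu_{\mathcal{C}}(B_R)\leq C_2(R,n).$$
   Context: $d_{\mathcal{C}}(p,q)=\frac12\ln\Big(\frac{\|q-a\|_e}{\|p-a\|_e}\cdot\frac{\|p-b\|_e}{\|q-b\|_e}\Big)$, where the line through distinct $p,q$ meets $\partial\mathcal{C}$ in $a,b$ with $a,p,q,b$ in this order. Finsler norm $\|u\|_{\mathcal{C}}=\frac12\|u\|_e\big(\frac1{\|p-p^+\|_e}+\frac1{\|p-p^-\|_e}\big)$ for $u\in T_p\mathcal{C}=\mathbb{R}^n$, $p^\pm$ the intersections of the line $p+\mathbb{R}u$ with $\partial\mathcal{C}$. Hilbert measure $\mu_{\mathcal{C}}(A)=\int_A\frac{\omega_n}{\mathrm{vol}_e(TB_{\mathcal{C}}(p))}d\mathrm{vol}_e(p)$ where $TB_{\mathcal{C}}(p)=\{u:\|u\|_{\mathcal{C}}<1\}$, $\mathrm{vol}_e$ Lebesgue measure, $\omega_n$ the volume of the Euclidean unit ball of $\mathbb{R}^n$. $B_R=B_R(x)=\{y\in\mathcal{C}:d_{\mathcal{C}}(x,y)<R\}$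 for some $x\in\mathcal{C}$. *)

theory Defs
  imports "HOL-Analysis.Analysis"
begin

text \<open>Boundary point hit by the ray from p in direction u (for a bounded open convex C, p in C, u nonzero).\<close>
definition ray_exit :: "'a::euclidean_space set \<Rightarrow> 'a \<Rightarrow> 'a \<Rightarrow> 'a" where
  "ray_exit C p u = p + (Sup {t::real. 0 \<le> t \<and> p + t *\<^sub>R u \<in> C}) *\<^sub>R u"

text \<open>Hilbert distance: a = ray_exit C p (p - q), b = ray_exit C q (q - p), so a,p,q,b in this order.\<close>
definition hilbert_dist :: "'a::euclidean_space set \<Rightarrow> 'a \<Rightarrow> 'a \<Rightarrow> real" where
  "hilbert_dist C p q =
     (if p = q then 0 else
       (let a = ray_exit C p (p - q); b = ray_exit C q (q - p) in
         (1/2) * ln ((norm (q - a) / norm (p - a)) * (norm (p - b) / norm (q - b)))))"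

definition finsler_norm :: "'a::euclidean_space set \<Rightarrow> 'a \<Rightarrow> 'a \<Rightarrow> real" where
  "finsler_norm C p u =
     (1/2) * norm u * (1 / norm (p - ray_exit C p u) + 1 / norm (p - ray_exit C p (- u)))"

definition tangent_ball :: "'a::euclidean_space set \<Rightarrow> 'a \<Rightarrow> 'a set" where
  "tangent_ball C p = {u. finsler_norm C p u < 1}"

definition hilbert_measure :: "'a::euclidean_space set \<Rightarrow> 'a set \<Rightarrow> ennreal" where
  "hilbert_measure C A =
     (\<integral>\<^sup>+ p. indicator A p *
        ennreal (measure lebesgue (ball (0::'a) 1) / measure lebesgue (tangent_ball C p)) \<partial>lebesgue)"

definition hilbert_ball :: "'a::euclidean_space set \<Rightarrow> 'a \<Rightarrow> real \<Rightarrow> 'a set" where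
  "hilbert_ball C x R = {y \<in> C. hilbert_dist C x y < R}"

end

(*
  Write g p for the Minkowski functional of C - p, so that the ray p + s u stays in C exactly
  while s * g p u < 1. The Finsler norm at p is (g p u + g p (-u)) / 2, and the cross ratio
  gives d(x, x + w) = 1/2 ln ((1 + g x (-w)) / (1 - g x w)). Convexity controls how the gauges
  change with the base point: g (x + w) <= g x / (1 - g x w) and g x <= (1 + g x (-w)) g (x + w).
  Hence B_R(x) lies between x + t/2 TB(x) and x + (e^(2R) - 1)/2 TB(x), where
  t = (e^(2R) - 1)/(e^(2R) + 1), and on these sets vol TB(p) is comparable to vol TB(x) up to
  the factors e^(2nR) and (1 + t)^n. Bounding the density omega_n / vol TB(p) uniformly on
  each set and integrating, vol TB(x) cancels and the two estimates remain.
*)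
theory Submission
  imports Defs
begin

lemma nonneg_le_of_scaled_less_one:
  fixes a b :: real
  assumes "0 \<le> a" "0 \<le> b" and less: "\<And>s. 0 \<le> s \<Longrightarrow> s * a < 1 \<Longrightarrow> s * b < 1"
  shows "b \<le> a"
proof (rule ccontr)
  assume "\<not> b \<le> a"
  then have "(1 / b) * a < 1" "(1 / b) * b = 1" using assms(1) by (auto simp: field_simps)
  then show False using less[of "1 / b"] assms(2) by auto
qed

lemma lmeasurable_affine_image_convex:
  fixes S :: "'a::euclidean_space set"
  assumes "convex S" "bounded S"
  shows "(\<lambda>u. c *\<^sub>R u + v) ` S \<in> lmeasurable"
proof -
  have "(\<lambda>u. c *\<^sub>R u + v) ` S = (\<lambda>u. v + c *\<^sub>R u) ` S" by (simp add: add.commute)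
  moreover have "convex ((\<lambda>u. v + c *\<^sub>R u) ` S)" using convex_affinity[OF assms(1)] .
  moreover have "bounded ((\<lambda>u. v + c *\<^sub>R u) ` S)"
    using bounded_translation[OF bounded_scaling[OF assms(2)]] by (simp add: image_image)
  ultimately show ?thesis using measurable_convex by metis
qed

lemma hilbert_measure_le_uniform:
  fixes C A S :: "'a::euclidean_space set"
  assumes "A \<subseteq> S" "S \<in> sets lebesgue"
    and density: "\<And>p. p \<in> A \<Longrightarrow>
      measure lebesgue (ball (0::'a) 1) / measure lebesgue (tangent_ball C p) \<le> K"
  shows "hilbert_measure C A \<le> ennreal K * emeasure lebesgue S"
proof -
  have "hilbert_measure C A \<le> (\<integral>\<^sup>+ p. ennreal K * indicator S p \<partial>lebesgue)"
    unfolding hilbert_measure_def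
    by (rule nn_integral_mono) (use assms in \<open>auto simp: indicator_def intro: ennreal_leI\<close>)
  also have "\<dots> = ennreal K * emeasure lebesgue S"
    using nn_integral_cmult_indicator[OF assms(2)] .
  finally show ?thesis .
qed

lemma hilbert_measure_ge_uniform:
  fixes C A S :: "'a::euclidean_space set"
  assumes "S \<subseteq> A" "S \<in> sets lebesgue"
    and density: "\<And>p. p \<in> S \<Longrightarrow>
      K \<le> measure lebesgue (ball (0::'a) 1) / measure lebesgue (tangent_ball C p)"
  shows "ennreal K * emeasure lebesgue S \<le> hilbert_measure C A"
proof -
  have "ennreal K * emeasure lebesgue S = (\<integral>\<^sup>+ p. ennreal K * indicator S p \<partial>lebesgue)"
    using nn_integral_cmult_indicator[OF assms(2)] by simp
  also have "\<dots> \<le> hilbert_measure C A"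
    unfolding hilbert_measure_def
    by (rule nn_integral_mono) (use assms in \<open>auto simp: indicator_def intro: ennreal_leI\<close>)
  finally show ?thesis .
qed

locale bounded_open_convex =
  fixes C :: "'a::euclidean_space set"
  assumes bounded_C: "bounded C" and open_C: "open C" and convex_C: "convex C"
begin

definition exit_time :: "'a \<Rightarrow> 'a \<Rightarrow> real" where
  "exit_time p u = Sup {t. 0 \<le> t \<and> p + t *\<^sub>R u \<in> C}"

(* In the notation of the paper, 1 / minkowski_gauge p u = |p - p^+| / |u|. *)
definition minkowski_gauge :: "'a \<Rightarrow> 'a \<Rightarrow> real" where
  "minkowski_gauge p u = (if u = 0 then 0 else 1 / exit_time p u)"

lemma exit_time_pos_and_iff:
  assumes p: "p \<in> C" and u: "u \<noteq> 0"
  shows "0 < exit_time p u" and "0 \<le> t \<Longrightarrow> p + t *\<^sub>R u \<in> C \<longleftrightarrow> t < exit_time p u"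
proof -
  define I where "I = {t. 0 \<le> t \<and> p + t *\<^sub>R u \<in> C}"
  have nu: "norm u > 0" using u by simp
  have step_in: "t + e / (2 * norm u) \<in> I" if "0 \<le> t" "e > 0" "ball (p + t *\<^sub>R u) e \<subseteq> C" for t e
  proof -
    have "dist (p + t *\<^sub>R u) (p + (t + e / (2 * norm u)) *\<^sub>R u) < e"
      using nu that by (simp add: dist_norm algebra_simps)
    then show ?thesis using that nu unfolding I_def by auto
  qed
  obtain M where M: "\<forall>y\<in>C. norm y \<le> M" using bounded_C bounded_iff by blast
  have bdd: "bdd_above I"
  proof (rule bdd_aboveI)
    fix t assume "t \<in> I"
    then have t: "0 \<le> t" "p + t *\<^sub>R u \<in> C" by (auto simp: I_def)
    have "t * norm u \<le> norm (p + t *\<^sub>R u) + norm p"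
      using t norm_triangle_ineq4[of "p + t *\<^sub>R u" p] by simp
    also have "\<dots> \<le> M + norm p" using M t by auto
    finally show "t \<le> (M + norm p) / norm u" using nu by (simp add: field_simps)
  qed
  have in_iff: "p + t *\<^sub>R u \<in> C \<longleftrightarrow> t < Sup I" if t: "0 \<le> t" for t
  proof
    assume "p + t *\<^sub>R u \<in> C"
    then obtain e where "e > 0" "ball (p + t *\<^sub>R u) e \<subseteq> C" using open_C open_contains_ball by blast
    with step_in t have "t + e / (2 * norm u) \<le> Sup I" using bdd cSup_upper by blast
    moreover have "0 < e / (2 * norm u)" using \<open>e > 0\<close> nu by simp
    ultimately show "t < Sup I" by linarith
  next
    assume "t < Sup I"
    moreover have "I \<noteq> {}" using p by (auto simp: I_def intro!: exI[of _ 0])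
    ultimately obtain t' where t': "t' \<in> I" "t < t'" using less_cSup_iff bdd by blast
    then have "p + t' *\<^sub>R u \<in> C" "t / t' \<in> {0..1}" using t by (auto simp: I_def)
    then have "(1 - t / t') *\<^sub>R p + (t / t') *\<^sub>R (p + t' *\<^sub>R u) \<in> C"
      using convex_C p unfolding convex_def by auto
    moreover have "(1 - t / t') *\<^sub>R p + (t / t') *\<^sub>R (p + t' *\<^sub>R u) = p + t *\<^sub>R u"
      using t t' by (simp add: algebra_simps)
    ultimately show "p + t *\<^sub>R u \<in> C" by simp
  qed
  show "0 < exit_time p u" using in_iff[of 0] p by (simp add: exit_time_def I_def)
  show "0 \<le> t \<Longrightarrow> p + t *\<^sub>R u \<in> C \<longleftrightarrow> t < exit_time p u"
    using in_iff by (simp add: exit_time_def I_def)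
qed

lemma mem_iff_minkowski_gauge_less_one:
  assumes "p \<in> C" "0 \<le> s"
  shows "p + s *\<^sub>R u \<in> C \<longleftrightarrow> s * minkowski_gauge p u < 1"
  using assms exit_time_pos_and_iff[OF assms(1), of u]
  by (cases "u = 0") (auto simp: minkowski_gauge_def field_simps)

lemma minkowski_gauge_pos: "p \<in> C \<Longrightarrow> u \<noteq> 0 \<Longrightarrow> 0 < minkowski_gauge p u"
  using exit_time_pos_and_iff(1) by (simp add: minkowski_gauge_def)

lemma minkowski_gauge_nonneg: "p \<in> C \<Longrightarrow> 0 \<le> minkowski_gauge p u"
  using minkowski_gauge_pos[of p u] by (cases "u = 0") (auto simp: minkowski_gauge_def)

lemma minkowski_gauge_leI:
  assumes p: "p \<in> C" and "0 \<le> c" and mem: "\<And>s. 0 \<le> s \<Longrightarrow> s * c < 1 \<Longrightarrow> p + s *\<^sub>R u \<in> C"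
  shows "minkowski_gauge p u \<le> c"
proof (rule nonneg_le_of_scaled_less_one[OF \<open>0 \<le> c\<close> minkowski_gauge_nonneg[OF p]])
  fix s :: real assume "0 \<le> s" "s * c < 1"
  then show "s * minkowski_gauge p u < 1"
    using mem mem_iff_minkowski_gauge_less_one[OF p] by blast
qed

lemma minkowski_gauge_geI:
  assumes p: "p \<in> C" and "0 \<le> c" and less: "\<And>s. 0 \<le> s \<Longrightarrow> p + s *\<^sub>R u \<in> C \<Longrightarrow> s * c < 1"
  shows "c \<le> minkowski_gauge p u"
proof (rule nonneg_le_of_scaled_less_one[OF minkowski_gauge_nonneg[OF p] \<open>0 \<le> c\<close>])
  fix s :: real assume "0 \<le> s" "s * minkowski_gauge p u < 1"
  then show "s * c < 1"
    using less mem_iff_minkowski_gauge_less_one[OF p] by blast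
qed

lemma minkowski_gauge_eqI:
  assumes "p \<in> C" "0 \<le> c" "\<And>s. 0 \<le> s \<Longrightarrow> p + s *\<^sub>R u \<in> C \<longleftrightarrow> s * c < 1"
  shows "minkowski_gauge p u = c"
  using minkowski_gauge_leI[OF assms(1,2)] minkowski_gauge_geI[OF assms(1,2)] assms(3)
  by (meson order_antisym)

lemma minkowski_gauge_less_one_iff: "p \<in> C \<Longrightarrow> p + w \<in> C \<longleftrightarrow> minkowski_gauge p w < 1"
  using mem_iff_minkowski_gauge_less_one[of p 1 w] by simp

lemma minkowski_gauge_scaleR:
  assumes p: "p \<in> C" and "0 \<le> c"
  shows "minkowski_gauge p (c *\<^sub>R u) = c * minkowski_gauge p u"
proof (rule minkowski_gauge_eqI[OF p])
  show "0 \<le> c * minkowski_gauge p u" using \<open>0 \<le> c\<close> minkowski_gauge_nonneg[OF p] by simp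
  fix s :: real assume "0 \<le> s"
  then show "p + s *\<^sub>R c *\<^sub>R u \<in> C \<longleftrightarrow> s * (c * minkowski_gauge p u) < 1"
    using mem_iff_minkowski_gauge_less_one[OF p, of "s * c" u] \<open>0 \<le> c\<close> by (simp add: mult.assoc)
qed

lemma minkowski_gauge_add:
  assumes p: "p \<in> C"
  shows "minkowski_gauge p (u + v) \<le> minkowski_gauge p u + minkowski_gauge p v"
proof (rule minkowski_gauge_leI[OF p])
  show "0 \<le> minkowski_gauge p u + minkowski_gauge p v" using minkowski_gauge_nonneg[OF p] by simp
  fix s :: real assume s: "0 \<le> s" "s * (minkowski_gauge p u + minkowski_gauge p v) < 1"
  define A where "A = s * minkowski_gauge p u"
  define B where "B = s * minkowski_gauge p v"
  have "0 \<le> A" "0 \<le> B" "A + B < 1"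
    using s minkowski_gauge_nonneg[OF p] by (auto simp: A_def B_def algebra_simps)
  define \<theta> where "\<theta> = A + (1 - A - B) / 2"
  have \<theta>: "A < \<theta>" "B < 1 - \<theta>" "0 < \<theta>" "\<theta> < 1"
    using \<open>0 \<le> A\<close> \<open>0 \<le> B\<close> \<open>A + B < 1\<close> by (auto simp: \<theta>_def field_simps)
  have "p + (s / \<theta>) *\<^sub>R u \<in> C" "p + (s / (1 - \<theta>)) *\<^sub>R v \<in> C"
    using mem_iff_minkowski_gauge_less_one[OF p] s \<theta> by (simp_all add: A_def B_def field_simps)
  then have "(1 - \<theta>) *\<^sub>R (p + (s / (1 - \<theta>)) *\<^sub>R v) + \<theta> *\<^sub>R (p + (s / \<theta>) *\<^sub>R u) \<in> C"
    using convex_C \<theta> unfolding convex_def by auto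
  moreover have "(1 - \<theta>) *\<^sub>R (p + (s / (1 - \<theta>)) *\<^sub>R v) + \<theta> *\<^sub>R (p + (s / \<theta>) *\<^sub>R u)
      = p + s *\<^sub>R (u + v)"
  proof -
    have "(1 - \<theta>) * (s / (1 - \<theta>)) = s" "\<theta> * (s / \<theta>) = s" using \<theta> by auto
    then show ?thesis by (simp add: scaleR_add_right algebra_simps)
  qed
  ultimately show "p + s *\<^sub>R (u + v) \<in> C" by simp
qed

lemma minkowski_gauge_le_ball:
  assumes p: "p \<in> C" and "0 < r" "ball p r \<subseteq> C"
  shows "minkowski_gauge p u \<le> norm u / r"
proof (rule minkowski_gauge_leI[OF p])
  show "0 \<le> norm u / r" using \<open>0 < r\<close> by simp
  fix s :: real assume "0 \<le> s" "s * (norm u / r) < 1"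
  then have "dist p (p + s *\<^sub>R u) < r" using \<open>0 < r\<close> by (simp add: dist_norm field_simps)
  then show "p + s *\<^sub>R u \<in> C" using assms by auto
qed

lemma minkowski_gauge_ge_ball:
  assumes p: "p \<in> C" and "0 < D" "C \<subseteq> ball p D"
  shows "norm u / D \<le> minkowski_gauge p u"
proof (rule minkowski_gauge_geI[OF p])
  show "0 \<le> norm u / D" using \<open>0 < D\<close> by simp
  fix s :: real assume "0 \<le> s" "p + s *\<^sub>R u \<in> C"
  then have "s * norm u < D" using assms by (auto simp: dist_norm)
  then show "s * (norm u / D) < 1" using \<open>0 < D\<close> by (simp add: field_simps)
qed

lemma minkowski_gauge_translate_le:
  assumes x: "x \<in> C" and xw: "x + w \<in> C"
  shows "minkowski_gauge (x + w) u \<le> minkowski_gauge x u / (1 - minkowski_gauge x w)"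
proof (rule minkowski_gauge_leI[OF xw])
  define b where "b = minkowski_gauge x w"
  have b: "0 \<le> b" "b < 1"
    using minkowski_gauge_nonneg[OF x] minkowski_gauge_less_one_iff[OF x] xw by (auto simp: b_def)
  show "0 \<le> minkowski_gauge x u / (1 - minkowski_gauge x w)"
    using b minkowski_gauge_nonneg[OF x, of u] by (simp add: b_def)
  fix s :: real assume s: "0 \<le> s" "s * (minkowski_gauge x u / (1 - minkowski_gauge x w)) < 1"
  have "s * minkowski_gauge x u < 1 - b" using s b by (simp add: b_def field_simps)
  moreover have "0 \<le> s * minkowski_gauge x u" using s minkowski_gauge_nonneg[OF x, of u] by simp
  moreover define a where "a = (s * minkowski_gauge x u + 1 - b) / 2"
  ultimately have a: "0 < a" "a < 1" "s * minkowski_gauge x u < a" "b < 1 - a"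
    using b by (auto simp: a_def field_simps)
  have "x + (1 / (1 - a)) *\<^sub>R w \<in> C" "x + (s / a) *\<^sub>R u \<in> C"
    using mem_iff_minkowski_gauge_less_one[OF x] a s by (simp_all add: b_def field_simps)
  then have "(1 - a) *\<^sub>R (x + (1 / (1 - a)) *\<^sub>R w) + a *\<^sub>R (x + (s / a) *\<^sub>R u) \<in> C"
    using convex_C a unfolding convex_def by auto
  moreover have "(1 - a) *\<^sub>R (x + (1 / (1 - a)) *\<^sub>R w) + a *\<^sub>R (x + (s / a) *\<^sub>R u)
      = (x + w) + s *\<^sub>R u"
  proof -
    have "(1 - a) * (1 / (1 - a)) = 1" "a * (s / a) = s" using a by auto
    then show ?thesis by (simp add: scaleR_add_right algebra_simps)
  qed
  ultimately show "(x + w) + s *\<^sub>R u \<in> C" by simp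
qed

lemma minkowski_gauge_le_translate:
  assumes x: "x \<in> C" and xw: "x + w \<in> C"
  shows "minkowski_gauge x u \<le> (1 + minkowski_gauge x (- w)) * minkowski_gauge (x + w) u"
proof (rule minkowski_gauge_leI[OF x])
  define c where "c = minkowski_gauge x (- w)"
  have "0 \<le> c" using minkowski_gauge_nonneg[OF x] by (simp add: c_def)
  show "0 \<le> (1 + minkowski_gauge x (- w)) * minkowski_gauge (x + w) u"
    using \<open>0 \<le> c\<close> minkowski_gauge_nonneg[OF xw, of u] by (simp add: c_def)
  fix s :: real assume s: "0 \<le> s"
    "s * ((1 + minkowski_gauge x (- w)) * minkowski_gauge (x + w) u) < 1"
  have "s * minkowski_gauge (x + w) u < 1 / (1 + c)"
    using s \<open>0 \<le> c\<close> by (simp add: c_def field_simps mult.commute mult.left_commute)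
  moreover have "0 \<le> s * minkowski_gauge (x + w) u"
    using s minkowski_gauge_nonneg[OF xw, of u] by simp
  moreover have "0 < 1 / (1 + c)" using \<open>0 \<le> c\<close> by simp
  moreover define a where "a = (s * minkowski_gauge (x + w) u + 1 / (1 + c)) / 2"
  ultimately have a: "0 < a" "a < 1 / (1 + c)" "s * minkowski_gauge (x + w) u < a"
    unfolding a_def by auto
  have "a * c < 1 - a" using a \<open>0 \<le> c\<close> by (simp add: field_simps)
  moreover have "0 \<le> a * c" using a \<open>0 \<le> c\<close> by simp
  ultimately have "a < 1" by linarith
  have "x + (a / (1 - a)) *\<^sub>R (- w) \<in> C" "(x + w) + (s / a) *\<^sub>R u \<in> C"
    using mem_iff_minkowski_gauge_less_one[OF x, of "a / (1 - a)" "- w"]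
      mem_iff_minkowski_gauge_less_one[OF xw, of "s / a" u] a s \<open>a < 1\<close> \<open>a * c < 1 - a\<close>
    by (simp_all add: c_def field_simps)
  then have "(1 - a) *\<^sub>R (x + (a / (1 - a)) *\<^sub>R (- w)) + a *\<^sub>R ((x + w) + (s / a) *\<^sub>R u) \<in> C"
    using convex_C a \<open>a < 1\<close> unfolding convex_def by auto
  moreover have "(1 - a) *\<^sub>R (x + (a / (1 - a)) *\<^sub>R (- w)) + a *\<^sub>R ((x + w) + (s / a) *\<^sub>R u)
      = x + s *\<^sub>R u"
  proof -
    have "(1 - a) * (a / (1 - a)) = a" "a * (s / a) = s" using a \<open>a < 1\<close> by auto
    then show ?thesis by (simp add: scaleR_add_right algebra_simps)
  qed
  ultimately show "x + s *\<^sub>R u \<in> C" by simp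
qed

lemma minkowski_gauge_translate_self:
  assumes x: "x \<in> C" and xw: "x + w \<in> C"
  shows "minkowski_gauge (x + w) w = minkowski_gauge x w / (1 - minkowski_gauge x w)"
proof (rule minkowski_gauge_eqI[OF xw])
  define b where "b = minkowski_gauge x w"
  have b: "0 \<le> b" "b < 1"
    using minkowski_gauge_nonneg[OF x] minkowski_gauge_less_one_iff[OF x] xw by (auto simp: b_def)
  then show "0 \<le> minkowski_gauge x w / (1 - minkowski_gauge x w)" by (simp add: b_def)
  fix s :: real assume "0 \<le> s"
  have "(x + w) + s *\<^sub>R w \<in> C \<longleftrightarrow> x + (1 + s) *\<^sub>R w \<in> C" by (simp add: algebra_simps)
  also have "\<dots> \<longleftrightarrow> (1 + s) * b < 1"
    using mem_iff_minkowski_gauge_less_one[OF x, of "1 + s" w] \<open>0 \<le> s\<close> by (simp add: b_def)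
  also have "\<dots> \<longleftrightarrow> s * (b / (1 - b)) < 1" using b by (simp add: field_simps)
  finally show "(x + w) + s *\<^sub>R w \<in> C \<longleftrightarrow> s * (minkowski_gauge x w / (1 - minkowski_gauge x w)) < 1"
    by (simp add: b_def)
qed

lemma ray_exit_minkowski_gauge:
  assumes "u \<noteq> 0"
  shows "ray_exit C p u = p + (1 / minkowski_gauge p u) *\<^sub>R u"
  using assms unfolding ray_exit_def minkowski_gauge_def exit_time_def by simp

lemma hilbert_dist_minkowski_gauge:
  assumes x: "x \<in> C" and xw: "x + w \<in> C" and w: "w \<noteq> 0"
  shows "hilbert_dist C x (x + w)
    = 1/2 * ln ((1 + minkowski_gauge x (- w)) / (1 - minkowski_gauge x w))"
proof -
  define a where "a = minkowski_gauge x (- w)"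
  define b where "b = minkowski_gauge x w"
  define g where "g = minkowski_gauge (x + w) w"
  have a: "0 < a" using minkowski_gauge_pos[OF x] w by (simp add: a_def)
  have b: "0 < b" "b < 1"
    using minkowski_gauge_pos[OF x w] minkowski_gauge_less_one_iff[OF x] xw by (auto simp: b_def)
  have g: "g = b / (1 - b)" using minkowski_gauge_translate_self[OF x xw] by (simp add: g_def b_def)
  have "0 < g" using g b by simp
  have exit_a: "ray_exit C x (x - (x + w)) = x - (1 / a) *\<^sub>R w"
    using ray_exit_minkowski_gauge[of "- w" x] w by (simp add: a_def)
  have exit_b: "ray_exit C (x + w) (x + w - x) = (x + w) + (1 / g) *\<^sub>R w"
    using ray_exit_minkowski_gauge[OF w, of "x + w"] by (simp add: g_def)
  have "x + w - ray_exit C x (x - (x + w)) = (1 + 1 / a) *\<^sub>R w"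
    "x - ray_exit C (x + w) (x + w - x) = - ((1 + 1 / g) *\<^sub>R w)"
    unfolding exit_a exit_b by (simp_all add: algebra_simps)
  then have norms: "norm (x + w - ray_exit C x (x - (x + w))) = (1 + 1 / a) * norm w"
    "norm (x - ray_exit C x (x - (x + w))) = (1 / a) * norm w"
    "norm (x - ray_exit C (x + w) (x + w - x)) = (1 + 1 / g) * norm w"
    "norm (x + w - ray_exit C (x + w) (x + w - x)) = (1 / g) * norm w"
    using a \<open>0 < g\<close> unfolding exit_a exit_b by (simp_all del: scaleR_minus_left)
  have "norm (x + w - ray_exit C x (x - (x + w))) / norm (x - ray_exit C x (x - (x + w)))
      * (norm (x - ray_exit C (x + w) (x + w - x)) / norm (x + w - ray_exit C (x + w) (x + w - x)))
      = (1 + a) / (1 - b)"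
    unfolding norms using a b w by (simp add: g field_simps)
  then show ?thesis using w unfolding hilbert_dist_def Let_def by (simp add: a_def b_def)
qed

lemma hilbert_dist_less_iff:
  assumes x: "x \<in> C" and xw: "x + w \<in> C" and "0 < R"
  shows "hilbert_dist C x (x + w) < R
    \<longleftrightarrow> 1 + minkowski_gauge x (- w) < exp (2 * R) * (1 - minkowski_gauge x w)"
proof (cases "w = 0")
  case True
  then show ?thesis using \<open>0 < R\<close> by (simp add: hilbert_dist_def minkowski_gauge_def)
next
  case False
  define a where "a = minkowski_gauge x (- w)"
  define b where "b = minkowski_gauge x w"
  have "0 \<le> a" "b < 1"
    using minkowski_gauge_nonneg[OF x] minkowski_gauge_less_one_iff[OF x] xw
    by (auto simp: a_def b_def)
  then have "0 < (1 + a) / (1 - b)" by simp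
  have "hilbert_dist C x (x + w) < R \<longleftrightarrow> ln ((1 + a) / (1 - b)) < 2 * R"
    using hilbert_dist_minkowski_gauge[OF x xw False] unfolding a_def b_def by linarith
  also have "\<dots> \<longleftrightarrow> (1 + a) / (1 - b) < exp (2 * R)"
    using \<open>0 < (1 + a) / (1 - b)\<close> by (metis exp_less_cancel_iff exp_ln)
  also have "\<dots> \<longleftrightarrow> 1 + a < exp (2 * R) * (1 - b)"
    using \<open>b < 1\<close> by (simp add: pos_divide_less_eq)
  finally show ?thesis by (simp add: a_def b_def)
qed

lemma finsler_norm_minkowski_gauge:
  assumes p: "p \<in> C"
  shows "finsler_norm C p u = (minkowski_gauge p u + minkowski_gauge p (- u)) / 2"
proof (cases "u = 0")
  case True
  then show ?thesis by (simp add: finsler_norm_def minkowski_gauge_def)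
next
  case False
  have "0 < minkowski_gauge p u" "0 < minkowski_gauge p (- u)"
    using minkowski_gauge_pos[OF p] False by auto
  moreover have norms: "norm (p - ray_exit C p u) = norm u / minkowski_gauge p u"
    "norm (p - ray_exit C p (- u)) = norm u / minkowski_gauge p (- u)"
    using calculation False ray_exit_minkowski_gauge[of u p] ray_exit_minkowski_gauge[of "- u" p]
    by simp_all
  ultimately show ?thesis using False unfolding finsler_norm_def norms by (simp add: field_simps)
qed

lemma finsler_norm_scaleR:
  assumes "p \<in> C" "0 \<le> c"
  shows "finsler_norm C p (c *\<^sub>R u) = c * finsler_norm C p u"
  using minkowski_gauge_scaleR[OF assms, of u] minkowski_gauge_scaleR[OF assms, of "- u"]
  by (simp add: finsler_norm_minkowski_gauge[OF assms(1)] algebra_simps)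

lemma finsler_norm_triangle:
  assumes "p \<in> C"
  shows "finsler_norm C p (u + v) \<le> finsler_norm C p u + finsler_norm C p v"
proof -
  have "minkowski_gauge p (- (u + v)) \<le> minkowski_gauge p (- u) + minkowski_gauge p (- v)"
    using minkowski_gauge_add[OF assms, of "- u" "- v"] by simp
  then have "minkowski_gauge p (u + v) + minkowski_gauge p (- (u + v))
      \<le> (minkowski_gauge p u + minkowski_gauge p (- u))
        + (minkowski_gauge p v + minkowski_gauge p (- v))"
    using minkowski_gauge_add[OF assms, of u v] by simp
  then show ?thesis
    unfolding finsler_norm_minkowski_gauge[OF assms] add_divide_distrib[symmetric]
    by (rule divide_right_mono) simp
qed

lemma convex_tangent_ball:
  assumes p: "p \<in> C"
  shows "convex (tangent_ball C p)"
  unfolding convex_def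
proof (intro ballI allI impI)
  fix u v :: 'a and \<alpha> \<beta> :: real
  assume "u \<in> tangent_ball C p" "v \<in> tangent_ball C p" "0 \<le> \<alpha>" "0 \<le> \<beta>" "\<alpha> + \<beta> = 1"
  then have u: "finsler_norm C p u < 1" and v: "finsler_norm C p v < 1"
    by (simp_all add: tangent_ball_def)
  have "\<alpha> * finsler_norm C p u + \<beta> * finsler_norm C p v < 1"
  proof (cases "\<alpha> = 0")
    case True
    then show ?thesis using v \<open>\<alpha> + \<beta> = 1\<close> by simp
  next
    case False
    then have "\<alpha> * finsler_norm C p u < \<alpha>" using u \<open>0 \<le> \<alpha>\<close> by simp
    moreover have "\<beta> * finsler_norm C p v \<le> \<beta>" using v \<open>0 \<le> \<beta>\<close> by (simp add: mult_left_le)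
    ultimately show ?thesis using \<open>\<alpha> + \<beta> = 1\<close> by linarith
  qed
  then show "\<alpha> *\<^sub>R u + \<beta> *\<^sub>R v \<in> tangent_ball C p"
    unfolding tangent_ball_def
    using finsler_norm_triangle[OF p, of "\<alpha> *\<^sub>R u" "\<beta> *\<^sub>R v"] finsler_norm_scaleR[OF p]
      \<open>0 \<le> \<alpha>\<close> \<open>0 \<le> \<beta>\<close> by simp
qed

lemma bounded_tangent_ball:
  assumes p: "p \<in> C"
  shows "bounded (tangent_ball C p)"
proof -
  obtain D where D: "0 < D" "C \<subseteq> ball p D" using bounded_C bounded_subset_ballD by blast
  have "tangent_ball C p \<subseteq> ball 0 (2 * D)"
  proof
    fix u assume "u \<in> tangent_ball C p"
    then have "minkowski_gauge p u + minkowski_gauge p (- u) < 2"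
      by (simp add: tangent_ball_def finsler_norm_minkowski_gauge[OF p])
    moreover have "norm u / D \<le> minkowski_gauge p u" "0 \<le> minkowski_gauge p (- u)"
      using minkowski_gauge_ge_ball[OF p D] minkowski_gauge_nonneg[OF p] by auto
    ultimately have "norm u / D < 2" by linarith
    then show "u \<in> ball 0 (2 * D)" using D by (simp add: field_simps)
  qed
  then show ?thesis using bounded_subset bounded_ball by blast
qed

lemma lmeasurable_tangent_ball: "p \<in> C \<Longrightarrow> tangent_ball C p \<in> lmeasurable"
  using measurable_convex convex_tangent_ball bounded_tangent_ball by blast

lemma measure_tangent_ball_pos:
  assumes p: "p \<in> C"
  shows "0 < measure lebesgue (tangent_ball C p)"
proof -
  obtain r where r: "0 < r" "ball p r \<subseteq> C" using open_C p open_contains_ball by blast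
  have "ball 0 r \<subseteq> tangent_ball C p"
  proof
    fix u :: 'a assume "u \<in> ball 0 r"
    then have "norm u / r < 1" using r by simp
    moreover have "minkowski_gauge p u \<le> norm u / r" "minkowski_gauge p (- u) \<le> norm u / r"
      using minkowski_gauge_le_ball[OF p r] by (metis norm_minus_cancel)+
    ultimately show "u \<in> tangent_ball C p"
      by (simp add: tangent_ball_def finsler_norm_minkowski_gauge[OF p])
  qed
  then have "measure lebesgue (ball (0::'a) r) \<le> measure lebesgue (tangent_ball C p)"
    by (rule measure_mono_fmeasurable) (simp_all add: lmeasurable_tangent_ball[OF p])
  moreover have "0 < measure lebesgue (ball (0::'a) r)" using r by (simp add: content_ball_pos)
  ultimately show ?thesis by linarith
qed

lemma finsler_norm_le_scaled:
  assumes p: "p \<in> C" and q: "q \<in> C"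
    and "minkowski_gauge p u \<le> k * minkowski_gauge q u"
    and "minkowski_gauge p (- u) \<le> k * minkowski_gauge q (- u)"
  shows "finsler_norm C p u \<le> k * finsler_norm C q u"
proof -
  have "minkowski_gauge p u + minkowski_gauge p (- u)
      \<le> k * (minkowski_gauge q u + minkowski_gauge q (- u))"
    using assms(3,4) by (simp add: distrib_left add_mono)
  then show ?thesis
    unfolding finsler_norm_minkowski_gauge[OF p] finsler_norm_minkowski_gauge[OF q]
      times_divide_eq_right
    by (rule divide_right_mono) simp
qed

lemma measure_tangent_ball_le_scaled:
  assumes p: "p \<in> C" and q: "q \<in> C" and "0 < c"
    and le: "\<And>u. finsler_norm C p u \<le> c * finsler_norm C q u"
  shows "measure lebesgue (tangent_ball C q) \<le> c ^ DIM('a) * measure lebesgue (tangent_ball C p)"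
proof -
  have "tangent_ball C q \<subseteq> (\<lambda>u. c *\<^sub>R u + 0) ` tangent_ball C p"
  proof
    fix u assume "u \<in> tangent_ball C q"
    have "finsler_norm C p ((1 / c) *\<^sub>R u) = finsler_norm C p u / c"
      using finsler_norm_scaleR[OF p, of "1 / c" u] \<open>0 < c\<close> by simp
    also have "\<dots> \<le> finsler_norm C q u"
      using le[of u] \<open>0 < c\<close> by (simp add: pos_divide_le_eq mult.commute)
    also have "\<dots> < 1" using \<open>u \<in> tangent_ball C q\<close> by (simp add: tangent_ball_def)
    finally have "finsler_norm C p ((1 / c) *\<^sub>R u) < 1" .
    moreover have "u = c *\<^sub>R ((1 / c) *\<^sub>R u) + 0" using \<open>0 < c\<close> by simp
    ultimately show "u \<in> (\<lambda>u. c *\<^sub>R u + 0) ` tangent_ball C p"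
      unfolding tangent_ball_def by blast
  qed
  then have "measure lebesgue (tangent_ball C q)
      \<le> measure lebesgue ((\<lambda>u. c *\<^sub>R u + 0) ` tangent_ball C p)"
    by (rule measure_mono_fmeasurable)
      (use lmeasurable_tangent_ball[OF q] lmeasurable_affine_image_convex[OF
          convex_tangent_ball[OF p] bounded_tangent_ball[OF p], of c 0] in auto)
  also have "\<dots> = c ^ DIM('a) * measure lebesgue (tangent_ball C p)"
    using measure_lebesgue_affine[of c 0 "tangent_ball C p"] \<open>0 < c\<close> by simp
  finally show ?thesis .
qed

lemma measure_tangent_ball_le_translate:
  assumes x: "x \<in> C" and xw: "x + w \<in> C"
  shows "measure lebesgue (tangent_ball C x)
    \<le> (1 / (1 - minkowski_gauge x w)) ^ DIM('a) * measure lebesgue (tangent_ball C (x + w))"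
proof (rule measure_tangent_ball_le_scaled[OF xw x])
  have "minkowski_gauge x w < 1" using minkowski_gauge_less_one_iff[OF x] xw by simp
  then show "0 < 1 / (1 - minkowski_gauge x w)" by simp
  fix u
  show "finsler_norm C (x + w) u \<le> 1 / (1 - minkowski_gauge x w) * finsler_norm C x u"
    using minkowski_gauge_translate_le[OF x xw, of u]
      minkowski_gauge_translate_le[OF x xw, of "- u"]
    by (intro finsler_norm_le_scaled[OF xw x]) simp_all
qed

lemma measure_tangent_ball_translate_le:
  assumes x: "x \<in> C" and xw: "x + w \<in> C"
  shows "measure lebesgue (tangent_ball C (x + w))
    \<le> (1 + minkowski_gauge x (- w)) ^ DIM('a) * measure lebesgue (tangent_ball C x)"
proof (rule measure_tangent_ball_le_scaled[OF x xw])
  show "0 < 1 + minkowski_gauge x (- w)" using minkowski_gauge_nonneg[OF x, of "- w"] by linarith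
  fix u
  show "finsler_norm C x u \<le> (1 + minkowski_gauge x (- w)) * finsler_norm C (x + w) u"
    using minkowski_gauge_le_translate[OF x xw, of u]
      minkowski_gauge_le_translate[OF x xw, of "- u"]
    by (rule finsler_norm_le_scaled[OF x xw])
qed

lemma emeasure_scaled_tangent_ball:
  assumes p: "p \<in> C" and "0 < c"
  shows "emeasure lebesgue ((\<lambda>u. c *\<^sub>R u + p) ` tangent_ball C p)
    = ennreal (c ^ DIM('a) * measure lebesgue (tangent_ball C p))"
  using emeasure_lebesgue_affine[of c p "tangent_ball C p"] \<open>0 < c\<close>
    emeasure_eq_measure2[OF lmeasurable_tangent_ball[OF p]]
  by (simp add: ennreal_mult)

lemma hilbert_ball_in_scaled_tangent_ball:
  assumes x: "x \<in> C" and "0 < R" and p: "p \<in> hilbert_ball C x R"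
  shows "p \<in> (\<lambda>u. ((exp (2 * R) - 1) / 2) *\<^sub>R u + x) ` tangent_ball C x"
    and "measure lebesgue (tangent_ball C x)
      \<le> exp (2 * R) ^ DIM('a) * measure lebesgue (tangent_ball C p)"
proof -
  define w where "w = p - x"
  define a where "a = minkowski_gauge x (- w)"
  define b where "b = minkowski_gauge x w"
  define E where "E = exp (2 * R)"
  have xw: "x + w \<in> C" and pw: "p = x + w" using p by (auto simp: w_def hilbert_ball_def)
  have "0 \<le> a" "0 \<le> b" using minkowski_gauge_nonneg[OF x] by (auto simp: a_def b_def)
  have "1 < E" using \<open>0 < R\<close> by (simp add: E_def)
  have ab: "1 + a < E * (1 - b)"
    using hilbert_dist_less_iff[OF x xw \<open>0 < R\<close>] p
    by (simp add: pw hilbert_ball_def a_def b_def E_def)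
  define c where "c = (E - 1) / 2"
  have "0 < c" using \<open>1 < E\<close> by (simp add: c_def)
  have "b \<le> E * b" using mult_right_mono[of 1 E b] \<open>0 \<le> b\<close> \<open>1 < E\<close> by simp
  then have "a + b < E - 1" using ab by (simp add: algebra_simps)
  moreover have "finsler_norm C x w = (a + b) / 2"
    by (simp add: finsler_norm_minkowski_gauge[OF x] a_def b_def add.commute)
  ultimately have "finsler_norm C x w < c" by (simp add: c_def)
  then have "finsler_norm C x ((1 / c) *\<^sub>R w) < 1"
    using finsler_norm_scaleR[OF x, of "1 / c" w] \<open>0 < c\<close> by (simp add: divide_less_eq)
  moreover have "p = c *\<^sub>R ((1 / c) *\<^sub>R w) + x" using \<open>0 < c\<close> by (simp add: pw)
  ultimately show "p \<in> (\<lambda>u. ((exp (2 * R) - 1) / 2) *\<^sub>R u + x) ` tangent_ball C x"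
    unfolding tangent_ball_def c_def E_def by blast
  have "b < 1" using minkowski_gauge_less_one_iff[OF x] xw by (simp add: b_def)
  then have "1 / (1 - b) \<le> E" using ab \<open>0 \<le> a\<close> by (simp add: pos_divide_le_eq)
  moreover have "0 < 1 / (1 - b)" using \<open>b < 1\<close> by simp
  ultimately have "(1 / (1 - b)) ^ DIM('a) \<le> E ^ DIM('a)" by (simp add: power_mono)
  then have "(1 / (1 - b)) ^ DIM('a) * measure lebesgue (tangent_ball C p)
      \<le> E ^ DIM('a) * measure lebesgue (tangent_ball C p)"
    by (rule mult_right_mono) simp
  then show "measure lebesgue (tangent_ball C x)
      \<le> exp (2 * R) ^ DIM('a) * measure lebesgue (tangent_ball C p)"
    using measure_tangent_ball_le_translate[OF x xw] by (simp add: pw E_def b_def)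
qed

lemma scaled_tangent_ball_in_hilbert_ball:
  assumes x: "x \<in> C" and "0 < R" "0 < t" and t: "1 + t \<le> exp (2 * R) * (1 - t)"
    and p: "p \<in> (\<lambda>u. (t / 2) *\<^sub>R u + x) ` tangent_ball C x"
  shows "p \<in> hilbert_ball C x R"
    and "measure lebesgue (tangent_ball C p)
      \<le> (1 + t) ^ DIM('a) * measure lebesgue (tangent_ball C x)"
proof -
  obtain v where v: "v \<in> tangent_ball C x" and pv: "p = (t / 2) *\<^sub>R v + x" using p by blast
  define w where "w = (t / 2) *\<^sub>R v"
  define a where "a = minkowski_gauge x (- w)"
  define b where "b = minkowski_gauge x w"
  define E where "E = exp (2 * R)"
  have "0 \<le> a" "0 \<le> b" using minkowski_gauge_nonneg[OF x] by (auto simp: a_def b_def)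
  have "finsler_norm C x w = (a + b) / 2"
    by (simp add: finsler_norm_minkowski_gauge[OF x] a_def b_def add.commute)
  moreover have "finsler_norm C x w < t / 2"
    using finsler_norm_scaleR[OF x, of "t / 2" v] v \<open>0 < t\<close> by (simp add: w_def tangent_ball_def)
  ultimately have "a + b < t" by simp
  have "t < 1"
  proof (rule ccontr)
    assume "\<not> t < 1"
    then have "E * (1 - t) \<le> 0" by (simp add: E_def mult_nonneg_nonpos)
    then show False using t \<open>0 < t\<close> by (simp add: E_def)
  qed
  have xw: "x + w \<in> C"
    using minkowski_gauge_less_one_iff[OF x] \<open>a + b < t\<close> \<open>0 \<le> a\<close> \<open>t < 1\<close> by (simp add: b_def)
  have pw: "p = x + w" by (simp add: pv w_def)
  have "E * (1 - t) \<le> E * (1 - b)"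
    using \<open>a + b < t\<close> \<open>0 \<le> a\<close> by (intro mult_left_mono) (auto simp: E_def)
  moreover have "1 + t \<le> E * (1 - t)" using t by (simp add: E_def)
  ultimately have "1 + a < E * (1 - b)" using \<open>a + b < t\<close> \<open>0 \<le> b\<close> by linarith
  then show "p \<in> hilbert_ball C x R"
    using hilbert_dist_less_iff[OF x xw \<open>0 < R\<close>] xw
    by (simp add: hilbert_ball_def pw a_def b_def E_def)
  have "(1 + a) ^ DIM('a) \<le> (1 + t) ^ DIM('a)"
    using \<open>a + b < t\<close> \<open>0 \<le> a\<close> \<open>0 \<le> b\<close> by (simp add: power_mono)
  then have "(1 + a) ^ DIM('a) * measure lebesgue (tangent_ball C x)
      \<le> (1 + t) ^ DIM('a) * measure lebesgue (tangent_ball C x)"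
    by (rule mult_right_mono) simp
  then show "measure lebesgue (tangent_ball C p)
      \<le> (1 + t) ^ DIM('a) * measure lebesgue (tangent_ball C x)"
    using measure_tangent_ball_translate_le[OF x xw] by (simp add: pw a_def)
qed

lemma hilbert_measure_hilbert_ball_le:
  assumes x: "x \<in> C" and "0 < R"
  shows "hilbert_measure C (hilbert_ball C x R)
    \<le> ennreal (((exp (4 * R) - 1) / 2) ^ DIM('a) * measure lebesgue (ball (0::'a) 1))"
proof -
  define \<omega> where "\<omega> = measure lebesgue (ball (0::'a) 1)"
  define V where "V = measure lebesgue (tangent_ball C x)"
  define E where "E = exp (2 * R)"
  define c where "c = (E - 1) / 2"
  define S where "S = (\<lambda>u. c *\<^sub>R u + x) ` tangent_ball C x"
  have "0 < \<omega>" by (simp add: \<omega>_def content_ball_pos)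
  have "0 < V" using measure_tangent_ball_pos[OF x] by (simp add: V_def)
  have "1 < E" using \<open>0 < R\<close> by (simp add: E_def)
  then have "0 < c" by (simp add: c_def)
  have "hilbert_measure C (hilbert_ball C x R)
    \<le> ennreal (\<omega> * E ^ DIM('a) / V) * emeasure lebesgue S"
  proof (rule hilbert_measure_le_uniform)
    show "hilbert_ball C x R \<subseteq> S"
      using hilbert_ball_in_scaled_tangent_ball(1)[OF x \<open>0 < R\<close>] by (auto simp: S_def c_def E_def)
    show "S \<in> sets lebesgue"
      using lmeasurable_affine_image_convex[OF convex_tangent_ball[OF x] bounded_tangent_ball[OF x]]
      by (simp add: S_def fmeasurableD)
    fix p assume p: "p \<in> hilbert_ball C x R"
    have "0 < measure lebesgue (tangent_ball C p)"
      using measure_tangent_ball_pos p by (simp add: hilbert_ball_def)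
    then have "\<omega> / measure lebesgue (tangent_ball C p)
        = \<omega> * E ^ DIM('a) / (E ^ DIM('a) * measure lebesgue (tangent_ball C p))"
      using \<open>1 < E\<close> by simp
    also have "\<dots> \<le> \<omega> * E ^ DIM('a) / V"
      using hilbert_ball_in_scaled_tangent_ball(2)[OF x \<open>0 < R\<close> p] \<open>0 < \<omega>\<close> \<open>0 < V\<close> \<open>1 < E\<close>
        \<open>0 < measure lebesgue (tangent_ball C p)\<close>
      by (intro divide_left_mono) (simp_all add: V_def E_def)
    finally show "measure lebesgue (ball (0::'a) 1) / measure lebesgue (tangent_ball C p)
        \<le> \<omega> * E ^ DIM('a) / V"
      by (simp add: \<omega>_def)
  qed
  also have "\<dots> = ennreal (\<omega> * (E * c) ^ DIM('a))"
  proof -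
    have "\<omega> * E ^ DIM('a) / V * (c ^ DIM('a) * V) = \<omega> * (E * c) ^ DIM('a)"
      using \<open>0 < V\<close> by (simp add: power_mult_distrib)
    then show ?thesis
      using emeasure_scaled_tangent_ball[OF x \<open>0 < c\<close>] \<open>0 < \<omega>\<close> \<open>0 < V\<close> \<open>0 < c\<close> \<open>1 < E\<close>
      by (simp add: S_def V_def ennreal_mult[symmetric])
  qed
  also have "\<dots> \<le> ennreal (((exp (4 * R) - 1) / 2) ^ DIM('a) * \<omega>)"
  proof (rule ennreal_leI)
    have "exp (4 * R) = E * E" by (simp add: E_def exp_add[symmetric])
    then have "E * c \<le> (exp (4 * R) - 1) / 2" using \<open>1 < E\<close> by (simp add: c_def field_simps)
    then have "(E * c) ^ DIM('a) \<le> ((exp (4 * R) - 1) / 2) ^ DIM('a)"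
      using \<open>1 < E\<close> \<open>0 < c\<close> by (intro power_mono) auto
    then show "\<omega> * (E * c) ^ DIM('a) \<le> ((exp (4 * R) - 1) / 2) ^ DIM('a) * \<omega>"
      using \<open>0 < \<omega>\<close> by (simp add: mult.commute)
  qed
  finally show ?thesis by (simp add: \<omega>_def)
qed

lemma hilbert_measure_hilbert_ball_ge:
  assumes x: "x \<in> C" and "0 < R"
  shows "ennreal (measure lebesgue (ball (0::'a) 1)
      * ((exp (2 * R) - 1) / (4 * exp (2 * R))) ^ DIM('a))
    \<le> hilbert_measure C (hilbert_ball C x R)"
proof -
  define \<omega> where "\<omega> = measure lebesgue (ball (0::'a) 1)"
  define V where "V = measure lebesgue (tangent_ball C x)"
  define E where "E = exp (2 * R)"
  define t where "t = (E - 1) / (E + 1)"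
  define S where "S = (\<lambda>u. (t / 2) *\<^sub>R u + x) ` tangent_ball C x"
  define K where "K = \<omega> / ((1 + t) ^ DIM('a) * V)"
  have "0 < \<omega>" by (simp add: \<omega>_def content_ball_pos)
  have "0 < V" using measure_tangent_ball_pos[OF x] by (simp add: V_def)
  have "1 < E" using \<open>0 < R\<close> by (simp add: E_def)
  then have "0 < t" "1 + t = E * (1 - t)" by (auto simp: t_def field_simps)
  have "ennreal K * emeasure lebesgue S \<le> hilbert_measure C (hilbert_ball C x R)"
  proof (rule hilbert_measure_ge_uniform)
    show "S \<subseteq> hilbert_ball C x R"
      using scaled_tangent_ball_in_hilbert_ball(1)[OF x \<open>0 < R\<close> \<open>0 < t\<close>] \<open>1 + t = E * (1 - t)\<close>
      by (auto simp: S_def E_def)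
    show "S \<in> sets lebesgue"
      using lmeasurable_affine_image_convex[OF convex_tangent_ball[OF x] bounded_tangent_ball[OF x]]
      by (simp add: S_def fmeasurableD)
    fix p assume p: "p \<in> S"
    have "p \<in> C"
      using scaled_tangent_ball_in_hilbert_ball(1)[OF x \<open>0 < R\<close> \<open>0 < t\<close> _ p[unfolded S_def]]
        \<open>1 + t = E * (1 - t)\<close> by (simp add: E_def hilbert_ball_def)
    show "K \<le> measure lebesgue (ball (0::'a) 1) / measure lebesgue (tangent_ball C p)"
      unfolding K_def \<omega>_def
      using scaled_tangent_ball_in_hilbert_ball(2)[OF x \<open>0 < R\<close> \<open>0 < t\<close> _ p[unfolded S_def]]
        \<open>1 + t = E * (1 - t)\<close> measure_tangent_ball_pos[OF \<open>p \<in> C\<close>] \<open>0 < V\<close> \<open>0 < t\<close>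
      by (intro divide_left_mono) (simp_all add: E_def V_def)
  qed
  moreover have "ennreal K * emeasure lebesgue S
      = ennreal (\<omega> * ((E - 1) / (4 * E)) ^ DIM('a))"
  proof -
    have "E + 1 \<noteq> 0" "E \<noteq> 0" using \<open>1 < E\<close> by auto
    then have scale: "t / 2 / (1 + t) = (E - 1) / (4 * E)" by (simp add: t_def divide_simps)
    have "K * ((t / 2) ^ DIM('a) * V) = \<omega> * (t / 2) ^ DIM('a) / (1 + t) ^ DIM('a)"
      using \<open>0 < V\<close> by (simp add: K_def)
    also have "\<dots> = \<omega> * ((E - 1) / (4 * E)) ^ DIM('a)"
      by (simp only: scale power_divide[symmetric] times_divide_eq_right[symmetric])
    finally have "K * ((t / 2) ^ DIM('a) * V) = \<omega> * ((E - 1) / (4 * E)) ^ DIM('a)" .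
    moreover have "0 < t / 2" using \<open>0 < t\<close> by simp
    ultimately show ?thesis
      using emeasure_scaled_tangent_ball[OF x \<open>0 < t / 2\<close>] \<open>0 < \<omega>\<close> \<open>0 < V\<close> \<open>0 < t\<close>
      by (simp add: S_def V_def K_def ennreal_mult[symmetric])
  qed
  ultimately show ?thesis by (simp add: \<omega>_def E_def)
qed

end

lemma hilbert_lower_constant_le:
  fixes R \<omega> :: real
  assumes "0 < R" "0 \<le> \<omega>"
  shows "\<omega> / (4 * exp (2 * real n * R)) * ((exp (2 * R) - 1) / (exp (2 * (R + 1)) - 1)) ^ n
    \<le> \<omega> * ((exp (2 * R) - 1) / (4 * exp (2 * R))) ^ n"
proof -
  define E where "E = exp (2 * R)"
  have "1 < E" using assms(1) by (simp add: E_def)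
  have "5 \<le> exp (2::real)" using exp_lower_Taylor_quadratic[of 2] by simp
  then have "4 \<le> E * exp 2 - 1" using \<open>1 < E\<close> mult_mono[of 1 E 5 "exp 2"] by simp
  have "(E - 1) / (E * exp 2 - 1) \<le> (E - 1) / 4"
    using \<open>1 < E\<close> \<open>4 \<le> E * exp 2 - 1\<close> by (intro divide_left_mono) auto
  then have "(E - 1) / (E * exp 2 - 1) / E \<le> (E - 1) / 4 / E"
    using \<open>1 < E\<close> by (intro divide_right_mono) auto
  then have ratio: "(E - 1) / (E * exp 2 - 1) / E \<le> (E - 1) / (4 * E)" by simp
  have "exp (2 * real n * R) = E ^ n" "exp (2 * (R + 1)) = E * exp 2"
    by (simp_all add: E_def exp_of_nat_mult[symmetric] exp_add[symmetric] algebra_simps)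
  then have "\<omega> / (4 * exp (2 * real n * R)) * ((exp (2 * R) - 1) / (exp (2 * (R + 1)) - 1)) ^ n
      = \<omega> / 4 * ((E - 1) / (E * exp 2 - 1) / E) ^ n"
    by (simp add: E_def power_divide power_mult_distrib)
  also have "\<dots> \<le> \<omega> * ((E - 1) / (E * exp 2 - 1) / E) ^ n"
    using assms(2) \<open>1 < E\<close> \<open>4 \<le> E * exp 2 - 1\<close> by simp
  also have "\<dots> \<le> \<omega> * ((E - 1) / (4 * E)) ^ n"
    using ratio \<open>1 < E\<close> \<open>4 \<le> E * exp 2 - 1\<close> assms(2) by (intro mult_left_mono power_mono) auto
  finally show ?thesis by (simp add: E_def)
qed

theorem mainTheorem10:
  fixes C :: "'a::euclidean_space set" and x :: 'a and R :: real
  assumes "bounded C" and "open C" and "convex C"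
    and "x \<in> C" and "R > 0"
  shows "ennreal (measure lebesgue (ball (0::'a) 1) / (4 * exp (2 * real DIM('a) * R))
            * ((exp (2 * R) - 1) / (exp (2 * (R + 1)) - 1)) ^ DIM('a))
           \<le> hilbert_measure C (hilbert_ball C x R)
       \<and> hilbert_measure C (hilbert_ball C x R)
           \<le> ennreal (((exp (4 * R) - 1) / 2) ^ DIM('a) * measure lebesgue (ball (0::'a) 1))"
proof -
  interpret bounded_open_convex C using assms(1-3) by unfold_locales
  have lower: "ennreal (measure lebesgue (ball (0::'a) 1) / (4 * exp (2 * real DIM('a) * R))
      * ((exp (2 * R) - 1) / (exp (2 * (R + 1)) - 1)) ^ DIM('a))
    \<le> ennreal (measure lebesgue (ball (0::'a) 1)
      * ((exp (2 * R) - 1) / (4 * exp (2 * R))) ^ DIM('a))"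
    using hilbert_lower_constant_le[OF assms(5)] by (intro ennreal_leI) simp
  show ?thesis
    using order_trans[OF lower hilbert_measure_hilbert_ball_ge[OF assms(4,5)]]
      hilbert_measure_hilbert_ball_le[OF assms(4,5)] ..
qed

end
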